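(* Consider the setting and algorithm described in the context, with a starting point satisfying $x^0\in\mathcal{S}$. Then there exist two positive scalars $m$ and $M$ such that $m<f(Kx^k)\le M$ for all $k\ge0$.
   Context: Setting: $\mathcal{S}\subseteq\mathbb{R}^n$ is nonempty, convex and compact; $A:\mathbb{R}^n\to\mathbb{R}^s$, $K:\mathbb{R}^n\to\mathbb{R}^p$ linear; $g:\mathbb{R}^s\to\mathbb{R}\cup\{+\infty\}$ proper, convex, lsc; $h:\mathbb{R}^n\to\mathbb{R}$ differentiable on an open set containing $\mathcal{S}$ with $L_{\nabla h}$-Lipschitz gradient there; $f:\mathbb{R}^p\to\mathbb{R}\cup\{+\infty\}$ proper, convex, lsc with $K(\mathcal{S})\subseteq\operatorname{int}(\operatorname{dom}f)$ and $f(Kx)>0$ for all $x\in\mathcal{S}$; $\mathcal{S}\cap A^{-1}(\operatorname{dom}g)\ne\emptyset$ and $\inf_{x\in\mathcal{S}}\{g(Ax)+h(x)\}>0$. Notation: $g^*$ Fenchel conjugate, $\iota_{\mathcal{S}}$ indicator of $\mathcal{S}$, $\operatorname{Proj}_{\mathcal{S}}$ Euclidean projection, $\operatorname{prox}_{\varphi,\kappa}(x)=\arg\min_y\{\varphi(y)+\frac1{2\kappa}\|y-x\|^2\}$, $\Psi(x,z,u,\delta,\gamma):=\langle z,Ax\rangle-g^*(z)+h(x)+\iota_{\mathcal{S}}(x)+\frac{\delta}{2}\|x-u\|^2-\frac{\gamma}{2}\|z\|^2$. Algorithm: given $0<\beta<2$, $\nu>0$, $0<q<1$, $\delta_0,\theta_0>0$,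 $\gamma_0=1$, $\varepsilon>0$ and $(x^0,z^0,u^0)$, for $k\ge0$: choose $y^{k+1}\in\partial f(Kx^k)$; $x^{k+1}:=\operatorname{Proj}_{\mathcal{S}}(u^k+\frac{\theta_k}{\delta_k}K^*y^{k+1}-\frac1{\delta_k}\nabla h(x^k)-\frac1{\delta_k}A^*z^k)$; $u^{k+1}:=(1-\beta)u^k+\beta x^{k+1}$; take the smallest $j_k\ge0$ such that with $\gamma_{k,j_k}:=\gamma_kq^{j_k}$, $z^{k+1,j_k}:=\operatorname{prox}_{g^*,1/\gamma_{k,j_k}}(Ax^{k+1}/\gamma_{k,j_k})$ one has $\theta_{k+1}:=\Psi(x^{k+1},z^{k+1,j_k},u^{k+1},\delta_k,\gamma_{k,j_k})/f(Kx^{k+1})>0$; set $\gamma_{k+1}:=\gamma_{k,j_k}$, $\delta_{k+1}:=2\nu+L_{\nabla h}+2\|A\|^2/\gamma_{k+1}$, $z^{k+1}:=z^{k+1,j_k}$; if $\|z^{k+1}\|>\min(\varepsilon/\gamma_{k+1},\sqrt{2\varepsilon/\gamma_{k+1}})$, replace $\gamma_{k+1}$ by $\gamma_{k+1}q$ and recompute $\delta_{k+1}$ by the same formula. *)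

theory Defs
  imports "HOL-Analysis.Analysis"
begin

definition proper_fun :: "('a \<Rightarrow> ereal) \<Rightarrow> bool" where
  "proper_fun f \<longleftrightarrow> (\<forall>x. f x \<noteq> -\<infinity>) \<and> (\<exists>x. f x \<noteq> \<infinity>)"

definition convex_fun :: "('a::real_vector \<Rightarrow> ereal) \<Rightarrow> bool" where
  "convex_fun f \<longleftrightarrow> (\<forall>x y. \<forall>t::real. 0 < t \<and> t < 1 \<longrightarrow>
      f ((1 - t) *\<^sub>R x + t *\<^sub>R y) \<le> ereal (1 - t) * f x + ereal t * f y)"

definition lsc_fun :: "('a::topological_space \<Rightarrow> ereal) \<Rightarrow> bool" where
  "lsc_fun f \<longleftrightarrow> (\<forall>x. \<forall>c. c < f x \<longrightarrow> (\<forall>\<^sub>F y in nhds x. c < f y))"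

definition edom :: "('a \<Rightarrow> ereal) \<Rightarrow> 'a set" where
  "edom f = {x. f x < \<infinity>}"

definition fconj :: "('a::real_inner \<Rightarrow> ereal) \<Rightarrow> 'a \<Rightarrow> ereal" where
  "fconj g z = (SUP w. ereal (z \<bullet> w) - g w)"

text \<open>Convex subdifferential (empty outside the domain).\<close>
definition subdiff :: "('a::real_inner \<Rightarrow> ereal) \<Rightarrow> 'a \<Rightarrow> 'a set" where
  "subdiff f p = {y. \<bar>f p\<bar> \<noteq> \<infinity> \<and> (\<forall>q. f p + ereal (y \<bullet> (q - p)) \<le> f q)}"

definition iota :: "'a set \<Rightarrow> 'a \<Rightarrow> ereal" where
  "iota S x = (if x \<in> S then 0 else \<infinity>)"

definition prox :: "('a::real_normed_vector \<Rightarrow> ereal) \<Rightarrow> real \<Rightarrow> 'a \<Rightarrow> 'a" where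
  "prox phi kappa x = (THE p. \<forall>y. phi p + ereal (1 / (2 * kappa) * (norm (p - x))\<^sup>2)
                                     \<le> phi y + ereal (1 / (2 * kappa) * (norm (y - x))\<^sup>2))"

definition Psi :: "('a::real_inner \<Rightarrow> 'b::real_inner) \<Rightarrow> ('b \<Rightarrow> ereal) \<Rightarrow> ('a \<Rightarrow> real) \<Rightarrow> 'a set
    \<Rightarrow> 'a \<Rightarrow> 'b \<Rightarrow> 'a \<Rightarrow> real \<Rightarrow> real \<Rightarrow> ereal" where
  "Psi A g h S x z u \<delta> \<gamma> =
     ereal (z \<bullet> A x) - fconj g z + ereal (h x) + iota S x
     + ereal (\<delta> / 2 * (norm (x - u))\<^sup>2) - ereal (\<gamma> / 2 * (norm z)\<^sup>2)"

end

theory Submission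
  imports Defs
begin

text \<open>The projection step keeps every iterate \<open>x\<^sup>k\<close> in \<open>\<S>\<close>, so \<open>K x\<^sup>k\<close> ranges over
  the compact set \<open>K(\<S>)\<close>. A proper convex function is finite and convex on its domain,
  hence continuous on the interior of its domain; since \<open>K(\<S>)\<close> lies in that interior,
  \<open>f\<close> attains a minimum and a maximum on it, and the minimum is positive because
  \<open>f\<close> is positive on \<open>K(\<S>)\<close>. None of the other update rules play a role.\<close>

lemma proper_fun_finite_on_edom:
  assumes "proper_fun f" "v \<in> edom f"
  obtains r where "f v = ereal r"
  using assms unfolding proper_fun_def edom_def by (cases "f v") auto

lemma convex_edom:
  assumes "proper_fun f" "convex_fun f"
  shows "convex (edom f)"
proof (rule convexI)
  fix a b and s t :: real
  assume ab: "a \<in> edom f" "b \<in> edom f" and st: "0 \<le> s" "0 \<le> t" "s + t = 1"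
  show "s *\<^sub>R a + t *\<^sub>R b \<in> edom f"
  proof (cases "t = 0 \<or> t = 1")
    case True
    then show ?thesis using ab st by auto
  next
    case False
    then have "0 < t" "t < 1" using st by auto
    then have "f ((1 - t) *\<^sub>R a + t *\<^sub>R b) \<le> ereal (1 - t) * f a + ereal t * f b"
      using assms(2) unfolding convex_fun_def by blast
    moreover obtain ra where "f a = ereal ra" using proper_fun_finite_on_edom[OF assms(1) ab(1)] .
    moreover obtain rb where "f b = ereal rb" using proper_fun_finite_on_edom[OF assms(1) ab(2)] .
    ultimately have "f ((1 - t) *\<^sub>R a + t *\<^sub>R b) < \<infinity>" by auto
    moreover have "s = 1 - t" using st by simp
    ultimately show ?thesis unfolding edom_def by simp
  qed
qed

lemma convex_on_edom:
  assumes "proper_fun f" "convex_fun f"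
  shows "convex_on (edom f) (\<lambda>v. real_of_ereal (f v))"
proof (rule convex_onI[OF _ convex_edom[OF assms]])
  fix t :: real and a b
  assume t: "0 < t" "t < 1" and ab: "a \<in> edom f" "b \<in> edom f"
  let ?c = "(1 - t) *\<^sub>R a + t *\<^sub>R b"
  have "?c \<in> edom f"
    using convex_edom[OF assms] ab t unfolding convex_alt by (auto simp: algebra_simps)
  then obtain rc where "f ?c = ereal rc" using proper_fun_finite_on_edom[OF assms(1)] by blast
  moreover obtain ra where "f a = ereal ra" using proper_fun_finite_on_edom[OF assms(1) ab(1)] .
  moreover obtain rb where "f b = ereal rb" using proper_fun_finite_on_edom[OF assms(1) ab(2)] .
  moreover have "f ?c \<le> ereal (1 - t) * f a + ereal t * f b"
    using assms(2) t unfolding convex_fun_def by blast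
  ultimately show "real_of_ereal (f ?c) \<le> (1 - t) * real_of_ereal (f a) + t * real_of_ereal (f b)"
    by simp
qed

lemma continuous_on_interior_edom:
  fixes f :: "'a::euclidean_space \<Rightarrow> ereal"
  assumes "proper_fun f" "convex_fun f"
  shows "continuous_on (interior (edom f)) (\<lambda>v. real_of_ereal (f v))"
  using convex_on_subset[OF convex_on_edom[OF assms] interior_subset] convex_edom[OF assms]
  by (simp add: convex_on_continuous)

lemma convex_fun_positive_bounds_on_compact:
  fixes f :: "'a::euclidean_space \<Rightarrow> ereal"
  assumes "proper_fun f" "convex_fun f"
    and C: "compact C" "C \<subseteq> interior (edom f)"
    and pos: "\<forall>v\<in>C. f v > 0"
  shows "\<exists>m M. 0 < m \<and> 0 < M \<and> (\<forall>v\<in>C. ereal m < f v \<and> f v \<le> ereal M)"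
proof (cases "C = {}")
  case True
  then show ?thesis by (intro exI[of _ 1]) auto
next
  case False
  define F where "F v = real_of_ereal (f v)" for v
  have f_eq: "f v = ereal (F v)" if "v \<in> C" for v
  proof -
    have "v \<in> edom f" using C(2) interior_subset that by blast
    then obtain r where "f v = ereal r" using proper_fun_finite_on_edom[OF assms(1)] by blast
    then show ?thesis by (simp add: F_def)
  qed
  have "continuous_on C F"
    using continuous_on_subset[OF continuous_on_interior_edom[OF assms(1,2)] C(2)] by (simp add: F_def)
  then obtain a b where "a \<in> C" "\<forall>v\<in>C. F a \<le> F v" "\<forall>v\<in>C. F v \<le> F b"
    using continuous_attains_inf[OF C(1) False] continuous_attains_sup[OF C(1) False] by blast
  moreover have "0 < F a" using pos \<open>a \<in> C\<close> f_eq by fastforce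
  ultimately show ?thesis
    by (intro exI[of _ "F a / 2"] exI[of _ "max (F b) 1"]) (auto simp: f_eq max.coboundedI1)
qed

lemma closest_point_iterates_in_set:
  assumes "closed S" "S \<noteq> {}" "x 0 \<in> S" "\<And>k. x (Suc k) = closest_point S (w k)"
  shows "x k \<in> S"
proof (cases k)
  case (Suc i)
  then show ?thesis using assms closest_point_in_set by metis
qed (use assms in simp)

theorem lemma5p1:
  fixes S :: "(real^'n) set"
    and A :: "real^'n \<Rightarrow> real^'s" and K :: "real^'n \<Rightarrow> real^'p"
    and g :: "real^'s \<Rightarrow> ereal" and f :: "real^'p \<Rightarrow> ereal"
    and h :: "real^'n \<Rightarrow> real" and gradh :: "real^'n \<Rightarrow> real^'n" and L :: real
    and \<beta> \<nu> q \<epsilon> \<delta>0 \<theta>0 :: real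
    and x u :: "nat \<Rightarrow> real^'n" and z :: "nat \<Rightarrow> real^'s" and y :: "nat \<Rightarrow> real^'p"
    and \<theta> \<delta> \<gamma> :: "nat \<Rightarrow> real" and j :: "nat \<Rightarrow> nat"
  assumes S: "S \<noteq> {}" "convex S" "compact S"
    and lin: "linear A" "linear K"
    and g: "proper_fun g" "convex_fun g" "lsc_fun g"
    and h: "\<exists>U. open U \<and> S \<subseteq> U \<and>
              (\<forall>v\<in>U. (h has_derivative (\<lambda>w. gradh v \<bullet> w)) (at v)) \<and>
              (\<forall>v\<in>U. \<forall>w\<in>U. norm (gradh v - gradh w) \<le> L * norm (v - w))"
    and L: "L \<ge> 0"
    and f: "proper_fun f" "convex_fun f" "lsc_fun f"
    and fdom: "K ` S \<subseteq> interior (edom f)"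
    and fpos: "\<forall>v\<in>S. f (K v) > 0"
    and dom_g: "S \<inter> A -` edom g \<noteq> {}"
    and inf_pos: "(INF v\<in>S. g (A v) + ereal (h v)) > 0"
    and par: "0 < \<beta>" "\<beta> < 2" "\<nu> > 0" "0 < q" "q < 1" "\<delta>0 > 0" "\<theta>0 > 0" "\<epsilon> > 0"
    and init: "\<delta> 0 = \<delta>0" "\<theta> 0 = \<theta>0" "\<gamma> 0 = 1" "x 0 \<in> S"
    and y_step: "\<And>k. y (Suc k) \<in> subdiff f (K (x k))"
    and x_step: "\<And>k. x (Suc k) = closest_point S
                   (u k + (\<theta> k / \<delta> k) *\<^sub>R adjoint K (y (Suc k))
                        - (1 / \<delta> k) *\<^sub>R gradh (x k) - (1 / \<delta> k) *\<^sub>R adjoint A (z k))"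
    and u_step: "\<And>k. u (Suc k) = (1 - \<beta>) *\<^sub>R u k + \<beta> *\<^sub>R x (Suc k)"
    and j_ok: "\<And>k. Psi A g h S (x (Suc k))
                   (prox (fconj g) (1 / (\<gamma> k * q ^ j k)) ((1 / (\<gamma> k * q ^ j k)) *\<^sub>R A (x (Suc k))))
                   (u (Suc k)) (\<delta> k) (\<gamma> k * q ^ j k) / f (K (x (Suc k))) > 0"
    and j_least: "\<And>k i. i < j k \<Longrightarrow> \<not> (Psi A g h S (x (Suc k))
                   (prox (fconj g) (1 / (\<gamma> k * q ^ i)) ((1 / (\<gamma> k * q ^ i)) *\<^sub>R A (x (Suc k))))
                   (u (Suc k)) (\<delta> k) (\<gamma> k * q ^ i) / f (K (x (Suc k))) > 0)"
    and z_step: "\<And>k. z (Suc k) = prox (fconj g) (1 / (\<gamma> k * q ^ j k))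
                   ((1 / (\<gamma> k * q ^ j k)) *\<^sub>R A (x (Suc k)))"
    and theta_step: "\<And>k. ereal (\<theta> (Suc k)) = Psi A g h S (x (Suc k)) (z (Suc k)) (u (Suc k))
                   (\<delta> k) (\<gamma> k * q ^ j k) / f (K (x (Suc k)))"
    and gamma_step: "\<And>k. \<gamma> (Suc k) =
                   (if norm (z (Suc k)) > min (\<epsilon> / (\<gamma> k * q ^ j k)) (sqrt (2 * \<epsilon> / (\<gamma> k * q ^ j k)))
                    then \<gamma> k * q ^ j k * q else \<gamma> k * q ^ j k)"
    and delta_step: "\<And>k. \<delta> (Suc k) = 2 * \<nu> + L + 2 * (onorm A)\<^sup>2 / \<gamma> (Suc k)"
  shows "\<exists>m M. 0 < m \<and> 0 < M \<and> (\<forall>k. ereal m < f (K (x k)) \<and> f (K (x k)) \<le> ereal M)"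
proof -
  have "compact (K ` S)"
    using compact_continuous_image[OF linear_continuous_on[OF iffD2[OF linear_linear lin(2)]] S(3)] .
  then obtain m M where bounds: "0 < m" "0 < M" "\<forall>v\<in>K ` S. ereal m < f v \<and> f v \<le> ereal M"
    using convex_fun_positive_bounds_on_compact[OF f(1,2) _ fdom] fpos by blast
  have "x k \<in> S" for k
    using closest_point_iterates_in_set[OF compact_imp_closed[OF S(3)] S(1) init(4) x_step] .
  then show ?thesis using bounds by blast
qed

end
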